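(* If $G$ is a nice connected graph of order $n$ and size $m$, then ${\rm ML}^{\rm W}(G) \leq 2(m+n-1)$; in particular ${\rm ML}^{\rm W}(G)\leq 4m$.
   Context: All graphs are finite and simple. A walk of a graph $G$ is a sequence of vertices $u_0u_1\dots u_p$ with $u_tu_{t+1}\in E(G)$ for all $t$ (vertices and edges may repeat); its length is $p$. For a walk $W$ of $G$, $G+W$ is the multigraph on $V(G)$ whose edge multiset consists of $E(G)$ together with each edge added as many times as $W$ traverses it. A multigraph is locally irregular if no two adjacent vertices have the same degree; a walk $W$ is irregularising if $G+W$ is locally irregular. A graph is nice if it is connected and not isomorphic to $K_2$. ${\rm ML}^{\rm W}(G)$ denotes the minimum length of an irregularising walk of $G$ (a walk of length $0$ is allowed). *)

theory Defs
  imports Main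
begin

definition simple_graph :: "'a set \<Rightarrow> 'a set set \<Rightarrow> bool" where
  "simple_graph V E \<longleftrightarrow> finite V \<and>
     (\<forall>e\<in>E. \<exists>u v. u \<noteq> v \<and> u \<in> V \<and> v \<in> V \<and> e = {u, v})"

definition is_walk :: "'a set \<Rightarrow> 'a set set \<Rightarrow> 'a list \<Rightarrow> bool" where
  "is_walk V E w \<longleftrightarrow> w \<noteq> [] \<and> set w \<subseteq> V \<and>
     (\<forall>i. i + 1 < length w \<longrightarrow> {w ! i, w ! (i + 1)} \<in> E)"

definition walk_length :: "'a list \<Rightarrow> nat" where
  "walk_length w = length w - 1"

definition connected_graph :: "'a set \<Rightarrow> 'a set set \<Rightarrow> bool" where
  "connected_graph V E \<longleftrightarrow> V \<noteq> {} \<and>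
     (\<forall>u\<in>V. \<forall>v\<in>V. \<exists>w. is_walk V E w \<and> hd w = u \<and> last w = v)"

definition nice_graph :: "'a set \<Rightarrow> 'a set set \<Rightarrow> bool" where
  "nice_graph V E \<longleftrightarrow> connected_graph V E \<and> \<not> (card V = 2 \<and> card E = 1)"

text \<open>Degree of v in the multigraph G+W: degree in G plus number of traversals of
  W of edges incident with v.\<close>
definition deg_plus_walk :: "'a set set \<Rightarrow> 'a list \<Rightarrow> 'a \<Rightarrow> nat" where
  "deg_plus_walk E w v = card {e \<in> E. v \<in> e} +
     card {i. i + 1 < length w \<and> (w ! i = v \<or> w ! (i + 1) = v)}"

text \<open>G+W has the same adjacency as G (W only uses edges of G).\<close>
definition irregularising :: "'a set \<Rightarrow> 'a set set \<Rightarrow> 'a list \<Rightarrow> bool" where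
  "irregularising V E w \<longleftrightarrow> is_walk V E w \<and>
     (\<forall>u v. {u, v} \<in> E \<longrightarrow> deg_plus_walk E w u \<noteq> deg_plus_walk E w v)"

definition MLW :: "'a set \<Rightarrow> 'a set set \<Rightarrow> nat" where
  "MLW V E = (LEAST k. \<exists>w. irregularising V E w \<and> walk_length w = k)"

end

theory Submission
  imports Defs
begin

(* Order the vertices so that the first three form a cherry u1 - r - u2 and every later vertex x
   has an earlier neighbour p.  The walk starts at r and, for each x, inserts a detour
   p x p x ... p that traverses the edge px 2j(x) times; this adds 2j(x) to the degrees of p and
   x and to no other degree.  The j(x) are fixed from the last vertex backwards: the final degree
   of x is b + 2j(x), where b is already known, so some j(x) \<le> f(x) + 1 avoids the degrees of the
   f(x) later neighbours of x.  The centre r has no detour of its own and is settled together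
   with u1 and u2. *)

fun walk_degree :: "'a list \<Rightarrow> 'a \<Rightarrow> nat" where
  "walk_degree (x # y # w) v = (if v = x \<or> v = y then 1 else 0) + walk_degree (y # w) v"
| "walk_degree _ v = 0"

abbreviation walk_in :: "'a set set \<Rightarrow> 'a list \<Rightarrow> bool" where
  "walk_in E \<equiv> successively (\<lambda>x y. {x, y} \<in> E)"

lemma walk_degree_eq_card:
  "walk_degree w v = card {i. i + 1 < length w \<and> (w ! i = v \<or> w ! (i + 1) = v)}"
proof (induction w v rule: walk_degree.induct)
  case (1 x y w v)
  let ?I = "\<lambda>w. {i. i + 1 < length w \<and> (w ! i = v \<or> w ! (i + 1) = v)}"
  have "?I (x # y # w) = (if v = x \<or> v = y then {0} else {}) \<union> Suc ` ?I (y # w)"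
  proof (rule set_eqI)
    show "i \<in> ?I (x # y # w) \<longleftrightarrow> i \<in> (if v = x \<or> v = y then {0} else {}) \<union> Suc ` ?I (y # w)" for i
      by (cases i) (auto simp: image_def)
  qed
  then show ?case
    using "1" by (simp add: card_image)
qed auto

lemma deg_plus_walk_eq: "deg_plus_walk E w v = card {e \<in> E. v \<in> e} + walk_degree w v"
  by (simp add: deg_plus_walk_def walk_degree_eq_card)

lemma is_walk_iff: "is_walk V E w \<longleftrightarrow> w \<noteq> [] \<and> set w \<subseteq> V \<and> walk_in E w"
  by (simp add: is_walk_def successively_conv_nth)

lemma walk_degree_append:
  "walk_degree (xs @ y # ys) v = walk_degree (xs @ [y]) v + walk_degree (y # ys) v"
  by (induction xs rule: induct_list012) auto

lemma walk_degree_notin: "v \<notin> set w \<Longrightarrow> walk_degree w v = 0"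
  by (induction w v rule: walk_degree.induct) auto

lemma walk_degree_excursion:
  "walk_degree (p # concat (replicate j [x, p]) @ ys) v
     = (if v = x \<or> v = p then 2 * j else 0) + walk_degree (p # ys) v"
  by (induction j) auto

lemma walk_in_excursion:
  "{p, x} \<in> E \<Longrightarrow> walk_in E (p # concat (replicate j [x, p]) @ ys) \<longleftrightarrow> walk_in E (p # ys)"
  by (induction j) (auto simp: insert_commute)

lemma length_concat_replicate: "length (concat (replicate j xs)) = j * length xs"
  by (induction j) auto

lemma insert_excursion:
  assumes "walk_in E w" "p \<in> set w" "{p, x} \<in> E" "0 < j"
  obtains w' where "walk_in E w'" "set w' = set w \<union> {x}" "length w' = length w + 2 * j"
    "\<And>v. walk_degree w' v = walk_degree w v + (if v = x \<or> v = p then 2 * j else 0)"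
proof -
  obtain w1 w2 where w: "w = w1 @ p # w2"
    using split_list[OF assms(2)] by blast
  define w' where "w' = w1 @ p # concat (replicate j [x, p]) @ w2"
  have "walk_in E w'"
    using assms(1) walk_in_excursion[OF assms(3), of j w2]
    by (auto simp: w w'_def successively_append_iff)
  moreover have "set w' = set w \<union> {x}"
    using assms(4) by (auto simp: w w'_def)
  moreover have "length w' = length w + 2 * j"
    using length_concat_replicate[of j "[x, p]"] by (simp add: w w'_def)
  moreover have "walk_degree w' v = walk_degree w v + (if v = x \<or> v = p then 2 * j else 0)" for v
    unfolding w w'_def walk_degree_append[of w1 p w2] walk_degree_append[of w1 p "_ @ w2"]
    by (simp add: walk_degree_excursion)
  ultimately show ?thesis
    using that by blast
qed

lemma finite_card_even_shift_preimage:
  fixes A :: "nat set"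
  assumes "finite A"
  shows "finite {j. c + 2 * j \<in> A} \<and> card {j. c + 2 * j \<in> A} \<le> card A"
proof -
  have inj: "inj (\<lambda>j::nat. c + 2 * j)"
    by (auto simp: inj_def)
  have eq: "{j. c + 2 * j \<in> A} = (\<lambda>j. c + 2 * j) -` A \<inter> UNIV"
    by auto
  show ?thesis
    unfolding eq using finite_vimageI[OF assms inj] card_vimage_inj_on_le[OF inj assms] by simp
qed

lemma finite_card_even_shifts_hitting:
  fixes cs :: "(nat \<times> nat set) list"
  assumes "\<forall>(c, A) \<in> set cs. finite A"
  shows "finite {j. \<exists>(c, A) \<in> set cs. c + 2 * j \<in> A} \<and>
    card {j. \<exists>(c, A) \<in> set cs. c + 2 * j \<in> A} \<le> (\<Sum>(c, A)\<leftarrow>cs. card A)"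
  using assms
proof (induction cs)
  case (Cons cA cs)
  obtain c A where [simp]: "cA = (c, A)"
    by fastforce
  let ?P = "{j. c + 2 * j \<in> A}" and ?B = "{j. \<exists>(c, A) \<in> set cs. c + 2 * j \<in> A}"
  have eq: "{j. \<exists>(c, A) \<in> set (cA # cs). c + 2 * j \<in> A} = ?P \<union> ?B"
    by auto
  have P: "finite ?P \<and> card ?P \<le> card A"
    using Cons.prems finite_card_even_shift_preimage[of A c] by simp
  have B: "finite ?B \<and> card ?B \<le> (\<Sum>(c, A)\<leftarrow>cs. card A)"
    using Cons by simp
  have "card (?P \<union> ?B) \<le> card ?P + card ?B"
    by (rule card_Un_le)
  then show ?case
    unfolding eq using P B by simp
qed simp

lemma ex_le_card_notin:
  fixes K :: "nat set"
  assumes "finite K"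
  shows "\<exists>j \<le> card K. j \<notin> K"
proof (rule ccontr)
  assume "\<not> (\<exists>j \<le> card K. j \<notin> K)"
  then have "card {0..card K} \<le> card K"
    using assms by (intro card_mono) auto
  then show False
    by simp
qed

lemma ex_even_shift_avoiding:
  fixes cs :: "(nat \<times> nat set) list"
  assumes "\<forall>(c, A) \<in> set cs. finite A"
  shows "\<exists>j>0. j \<le> Suc (\<Sum>(c, A)\<leftarrow>cs. card A) \<and> (\<forall>(c, A) \<in> set cs. c + 2 * j \<notin> A)"
proof -
  define bad where "bad = {j. \<exists>(c, A) \<in> set cs. c + 2 * j \<in> A}"
  have bad: "finite bad" "card bad \<le> (\<Sum>(c, A)\<leftarrow>cs. card A)"
    unfolding bad_def using finite_card_even_shifts_hitting[OF assms] by auto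
  obtain j where j: "j \<le> card (insert 0 bad)" "j \<notin> insert 0 bad"
    using ex_le_card_notin[of "insert 0 bad"] bad(1) by blast
  have "card (insert 0 bad) \<le> Suc (card bad)"
    by (simp add: card_insert_if bad(1))
  then show ?thesis
    using j bad(2) unfolding bad_def by (intro exI[of _ j]) auto
qed

definition induced_edges :: "'a set set \<Rightarrow> 'a set \<Rightarrow> 'a set set" where
  "induced_edges E S = {e \<in> E. e \<subseteq> S}"

lemma finite_induced_edges: "finite S \<Longrightarrow> finite (induced_edges E S)"
  unfolding induced_edges_def by (rule finite_subset[of _ "Pow S"]) auto

lemma card_induced_edges_insert:
  assumes "finite S" "x \<notin> S"
  shows "card (induced_edges E S) + card {v \<in> S. {v, x} \<in> E} \<le> card (induced_edges E (insert x S))"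
proof -
  let ?N = "{v \<in> S. {v, x} \<in> E}"
  have inj: "inj_on (\<lambda>v. {v, x}) ?N"
    using assms(2) by (auto simp: inj_on_def doubleton_eq_iff)
  have disjoint: "induced_edges E S \<inter> (\<lambda>v. {v, x}) ` ?N = {}"
    using assms(2) by (auto simp: induced_edges_def)
  have "card (induced_edges E S) + card ?N = card (induced_edges E S \<union> (\<lambda>v. {v, x}) ` ?N)"
    using card_Un_disjoint[OF finite_induced_edges[OF assms(1)] _ disjoint] card_image[OF inj] assms(1)
    by simp
  also have "\<dots> \<le> card (induced_edges E (insert x S))"
    using assms(1) by (intro card_mono finite_induced_edges) (auto simp: induced_edges_def)
  finally show ?thesis .
qed

lemma card_induced_edges_cherry:
  assumes "r \<noteq> u1" "r \<noteq> u2" "u1 \<noteq> u2" "{r, u1} \<in> E" "{r, u2} \<in> E"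
  shows "2 + (if {u1, u2} \<in> E then 1 else 0) \<le> card (induced_edges E {r, u1, u2})"
proof -
  let ?C = "{{r, u1}, {r, u2}} \<union> (if {u1, u2} \<in> E then {{u1, u2}} else {})"
  have "card ?C = 2 + (if {u1, u2} \<in> E then 1 else 0)"
    using assms(1-3) by (auto simp: doubleton_eq_iff)
  moreover have "card ?C \<le> card (induced_edges E {r, u1, u2})"
    using assms(4,5) by (intro card_mono finite_induced_edges) (auto simp: induced_edges_def)
  ultimately show ?thesis
    by simp
qed

inductive grown_from_cherry :: "'a set set \<Rightarrow> 'a set \<Rightarrow> bool" for E where
  cherry: "\<lbrakk>r \<noteq> u1; r \<noteq> u2; u1 \<noteq> u2; {r, u1} \<in> E; {r, u2} \<in> E\<rbrakk>
    \<Longrightarrow> grown_from_cherry E {r, u1, u2}"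
| grow: "\<lbrakk>grown_from_cherry E S; x \<notin> S; p \<in> S; {p, x} \<in> E\<rbrakk>
    \<Longrightarrow> grown_from_cherry E (insert x S)"

lemma grown_from_cherry_card:
  "grown_from_cherry E S \<Longrightarrow> finite S \<and> card S \<le> card (induced_edges E S) + 1"
proof (induction rule: grown_from_cherry.induct)
  case (cherry r u1 u2)
  then show ?case
    using card_induced_edges_cherry[OF cherry] by simp
next
  case (grow S x p)
  have "0 < card {v \<in> S. {v, x} \<in> E}"
    using grow by (auto simp: card_gt_0_iff)
  then show ?case
    using grow card_induced_edges_insert[of S x E] by simp
qed

(* b v is the degree that v will have apart from the edges traversed by w, and F v is the set of
   final degrees of the neighbours of v outside S, which v must avoid. *)
definition irregularises_on ::
    "'a set set \<Rightarrow> 'a set \<Rightarrow> ('a \<Rightarrow> nat) \<Rightarrow> ('a \<Rightarrow> nat set) \<Rightarrow> 'a list \<Rightarrow> bool" where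
  "irregularises_on E S b F w \<longleftrightarrow> walk_in E w \<and> set w = S \<and>
     (\<forall>u v. {u, v} \<in> E \<longrightarrow> u \<in> S \<longrightarrow> v \<in> S \<longrightarrow> u \<noteq> v \<longrightarrow>
        b u + walk_degree w u \<noteq> b v + walk_degree w v) \<and>
     (\<forall>v \<in> S. b v + walk_degree w v \<notin> F v)"

lemma irregularises_on_insert:
  assumes w: "irregularises_on E S (b(p := b p + 2 * j))
      (\<lambda>v. if {v, x} \<in> E then insert (b x + 2 * j) (F v) else F v) w"
    and x: "x \<notin> S" "p \<in> S" "{p, x} \<in> E" "0 < j" "b x + 2 * j \<notin> F x"
  obtains w' where "irregularises_on E (insert x S) b F w'" "length w' = length w + 2 * j"
proof -
  let ?b = "b(p := b p + 2 * j)"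
  have walk: "walk_in E w" and set_w: "set w = S"
    using w by (auto simp: irregularises_on_def)
  obtain w' where w': "walk_in E w'" "set w' = S \<union> {x}" "length w' = length w + 2 * j"
    "\<And>v. walk_degree w' v = walk_degree w v + (if v = x \<or> v = p then 2 * j else 0)"
    using insert_excursion[OF walk _ x(3,4)] x(2) set_w by metis
  have deg_S: "b v + walk_degree w' v = ?b v + walk_degree w v" if "v \<in> S" for v
    using that x(1) w'(4)[of v] by auto
  have deg_x: "b x + walk_degree w' x = b x + 2 * j"
    using w'(4)[of x] walk_degree_notin[of x w] x(1) set_w by simp
  have "b u + walk_degree w' u \<noteq> b v + walk_degree w' v"
    if uv: "{u, v} \<in> E" "u \<in> insert x S" "v \<in> insert x S" "u \<noteq> v" for u v
  proof -
    have x_nb: "?b y + walk_degree w y \<noteq> b x + 2 * j" if "{y, x} \<in> E" "y \<in> S" for y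
      using w that by (auto simp: irregularises_on_def)
    consider "u = x" "v \<in> S" | "v = x" "u \<in> S" | "u \<in> S" "v \<in> S"
      using uv by auto
    then show ?thesis
    proof cases
      case 1
      then show ?thesis
        using x_nb[of v] uv(1) deg_S deg_x by (auto simp: insert_commute)
    next
      case 2
      then show ?thesis
        using x_nb[of u] uv(1) deg_S deg_x by auto
    next
      case 3
      then show ?thesis
        using w uv(1,4) deg_S by (auto simp: irregularises_on_def)
    qed
  qed
  moreover have "b v + walk_degree w' v \<notin> F v" if "v \<in> insert x S" for v
    using that w deg_S deg_x x(5) by (auto simp: irregularises_on_def split: if_splits)
  ultimately have "irregularises_on E (insert x S) b F w'"
    using w' by (simp add: irregularises_on_def)
  then show ?thesis
    using that w'(3) by blast
qed

lemma irregularises_on_cherry: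
  assumes cherry: "r \<noteq> u1" "r \<noteq> u2" "u1 \<noteq> u2" "{r, u1} \<in> E" "{r, u2} \<in> E"
    and fin: "\<forall>v. finite (F v)"
  obtains w where "irregularises_on E {r, u1, u2} b F w"
    "length w < 2 * (card {r, u1, u2} + card (induced_edges E {r, u1, u2})
      + (\<Sum>v\<in>{r, u1, u2}. card (F v)))"
proof -
  \<comment> \<open>The degrees of r and u2 differ by b r + 2 j1 - b u2 whatever j2 is, so j1 must settle it.\<close>
  obtain j1 where j1: "0 < j1" "j1 \<le> card (F u1) + 2" "b u1 + 2 * j1 \<notin> F u1" "b r + 2 * j1 \<noteq> b u2"
    using ex_even_shift_avoiding[of "[(b u1, F u1), (b r, {b u2})]"] fin by auto
  let ?e = "if {u1, u2} \<in> E then 1 else 0 :: nat"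
  obtain j2 where j2: "0 < j2" "j2 \<le> card (F u2) + card (F r) + ?e + 2"
    "b u2 + 2 * j2 \<notin> F u2" "b r + 2 * j1 + 2 * j2 \<notin> F r" "b r + 2 * j2 \<noteq> b u1"
    "{u1, u2} \<in> E \<Longrightarrow> b u2 + 2 * j2 \<noteq> b u1 + 2 * j1"
    using ex_even_shift_avoiding[of "[(b u2, F u2), (b r + 2 * j1, F r), (b r, {b u1}),
        (b u2, if {u1, u2} \<in> E then {b u1 + 2 * j1} else {})]"] fin
    by (cases "{u1, u2} \<in> E") auto
  obtain w1 where w1: "walk_in E w1" "set w1 = {r, u1}" "length w1 = 1 + 2 * j1"
    "\<And>v. walk_degree w1 v = (if v = u1 \<or> v = r then 2 * j1 else 0)"
    using insert_excursion[of E "[r]" r u1 j1] cherry(4) j1(1) by (auto simp: insert_commute)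
  obtain w where w: "walk_in E w" "set w = {r, u1, u2}" "length w = 1 + 2 * j1 + 2 * j2"
    "\<And>v. walk_degree w v = walk_degree w1 v + (if v = u2 \<or> v = r then 2 * j2 else 0)"
    using insert_excursion[OF w1(1) _ cherry(5) j2(1)] w1(2,3) by (auto simp: insert_commute)
  have deg: "walk_degree w r = 2 * j1 + 2 * j2" "walk_degree w u1 = 2 * j1" "walk_degree w u2 = 2 * j2"
    using w(4) w1(4) cherry(1-3) by auto
  have "irregularises_on E {r, u1, u2} b F w"
    unfolding irregularises_on_def using w(1,2) deg j1 j2
    by (auto simp: insert_commute add.assoc)
  moreover have "length w < 2 * (card {r, u1, u2} + card (induced_edges E {r, u1, u2})
      + (\<Sum>v\<in>{r, u1, u2}. card (F v)))"
    using w(3) j1(2) j2(2) card_induced_edges_cherry[OF cherry] cherry(1-3) by simp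
  ultimately show ?thesis
    using that by blast
qed

lemma sum_card_insert_if_le:
  assumes "finite S" "\<forall>v. finite (F v)"
  shows "(\<Sum>v\<in>S. card (if P v then insert a (F v) else F v))
    \<le> (\<Sum>v\<in>S. card (F v)) + card {v \<in> S. P v}"
proof -
  have "(\<Sum>v\<in>S. card (if P v then insert a (F v) else F v))
      \<le> (\<Sum>v\<in>S. card (F v) + (if P v then 1 else 0))"
    using assms(2) by (intro sum_mono) (simp add: card_insert_if)
  also have "\<dots> = (\<Sum>v\<in>S. card (F v)) + card {v \<in> S. P v}"
    using assms(1) by (simp add: sum.distrib sum.inter_filter[symmetric])
  finally show ?thesis .
qed

lemma grown_from_cherry_irregularises_on:
  assumes "grown_from_cherry E S" "\<forall>v. finite (F v)"
  shows "\<exists>w. irregularises_on E S b F w \<and>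
    length w < 2 * (card S + card (induced_edges E S) + (\<Sum>v\<in>S. card (F v)))"
  using assms
proof (induction arbitrary: b F rule: grown_from_cherry.induct)
  case (cherry r u1 u2)
  then show ?case
    using irregularises_on_cherry by metis
next
  case (grow S x p)
  obtain j where j: "0 < j" "j \<le> card (F x) + 1" "b x + 2 * j \<notin> F x"
    using ex_even_shift_avoiding[of "[(b x, F x)]"] grow.prems by auto
  \<comment> \<open>x receives its final degree b x + 2 j here, p the same shift via b,
    and the neighbours of x in S must avoid that value.\<close>
  define F' where "F' v = (if {v, x} \<in> E then insert (b x + 2 * j) (F v) else F v)" for v
  have "\<forall>v. finite (F' v)"
    using grow.prems by (simp add: F'_def)
  then obtain w where w: "irregularises_on E S (b(p := b p + 2 * j)) F' w"
    "length w < 2 * (card S + card (induced_edges E S) + (\<Sum>v\<in>S. card (F' v)))"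
    using grow.IH by blast
  obtain w' where w': "irregularises_on E (insert x S) b F w'" "length w' = length w + 2 * j"
    using irregularises_on_insert[OF w(1)[unfolded F'_def] grow.hyps(2-4) j(1,3)] by blast
  have fin: "finite S"
    using grown_from_cherry_card[OF grow.hyps(1)] by simp
  have "(\<Sum>v\<in>S. card (F' v)) \<le> (\<Sum>v\<in>S. card (F v)) + card {v \<in> S. {v, x} \<in> E}"
    unfolding F'_def using sum_card_insert_if_le[OF fin grow.prems] .
  then have "length w' < 2 * (card (insert x S) + card (induced_edges E (insert x S))
      + (\<Sum>v\<in>insert x S. card (F v)))"
    using w(2) w'(2) j(2) card_induced_edges_insert[OF fin grow.hyps(2), of E] fin grow.hyps(2)
    by simp
  with w'(1) show ?case
    by blast
qed

lemma successively_leaves_set: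
  assumes "successively P w" "w \<noteq> []" "hd w \<in> S" "last w \<notin> S"
  shows "\<exists>x y. P x y \<and> x \<in> S \<and> y \<in> set w \<and> y \<notin> S"
  using assms by (induction w rule: induct_list012) (auto split: if_splits)

lemma connected_graph_edge_leaving:
  assumes "connected_graph V E" "s \<in> S" "S \<subseteq> V" "t \<in> V" "t \<notin> S"
  obtains x y where "{x, y} \<in> E" "x \<in> S" "y \<in> V" "y \<notin> S"
proof -
  obtain w where "is_walk V E w" "hd w = s" "last w = t"
    using assms unfolding connected_graph_def by blast
  then show ?thesis
    using successively_leaves_set[of "\<lambda>x y. {x, y} \<in> E" w S] assms(2,5) that
    by (auto simp: is_walk_iff)
qed

lemma grown_from_cherry_nonempty: "grown_from_cherry E S \<Longrightarrow> S \<noteq> {}"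
  by (cases rule: grown_from_cherry.cases) auto

lemma grown_from_cherry_spanning:
  assumes "finite V" "connected_graph V E"
  shows "grown_from_cherry E S \<Longrightarrow> S \<subseteq> V \<Longrightarrow> grown_from_cherry E V"
proof (induction "card (V - S)" arbitrary: S rule: less_induct)
  case less
  show ?case
  proof (cases "V \<subseteq> S")
    case True
    then show ?thesis
      using less by (metis subset_antisym)
  next
    case False
    then obtain t where "t \<in> V" "t \<notin> S"
      by blast
    moreover have "S \<noteq> {}"
      using grown_from_cherry_nonempty[OF less(2)] .
    ultimately obtain p x where px: "{p, x} \<in> E" "p \<in> S" "x \<in> V" "x \<notin> S"
      using connected_graph_edge_leaving[OF assms(2) _ less(3)] by blast
    have "card (V - insert x S) < card (V - S)"
      using px(3,4) assms(1) by (intro psubset_card_mono) auto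
    then show ?thesis
      using less(1) grown_from_cherry.grow[OF less(2) px(4,2,1)] less(3) px(3) by blast
  qed
qed

lemma simple_graph_edgeD:
  assumes "simple_graph V E" "{u, v} \<in> E"
  shows "u \<noteq> v" "u \<in> V" "v \<in> V"
  using assms unfolding simple_graph_def by (metis doubleton_eq_iff)+

lemma nice_graph_trivial_or_grown_from_cherry:
  assumes simple: "simple_graph V E" and nice: "nice_graph V E"
  shows "(\<exists>a. V = {a} \<and> E = {}) \<or> grown_from_cherry E V"
proof -
  have con: "connected_graph V E" and finV: "finite V"
    using assms unfolding nice_graph_def simple_graph_def by auto
  obtain a where a: "a \<in> V"
    using con unfolding connected_graph_def by blast
  show ?thesis
  proof (cases "V = {a}")
    case True
    moreover have "E = {}"
      using simple True unfolding simple_graph_def by blast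
    ultimately show ?thesis
      by blast
  next
    case False
    then obtain t where "t \<in> V" "t \<notin> {a}"
      using a by blast
    then obtain y where ay: "{a, y} \<in> E" "y \<in> V" "y \<noteq> a"
      using connected_graph_edge_leaving[OF con, of a "{a}"] a by blast
    have "\<not> V \<subseteq> {a, y}"
    proof
      assume "V \<subseteq> {a, y}"
      then have V: "V = {a, y}"
        using a ay(2) by blast
      have "E \<subseteq> {{a, y}}"
      proof
        fix e
        assume "e \<in> E"
        then obtain u v where "u \<noteq> v" "u \<in> V" "v \<in> V" "e = {u, v}"
          using simple unfolding simple_graph_def by blast
        then show "e \<in> {{a, y}}"
          using V by auto
      qed
      then have "E = {{a, y}}"
        using ay(1) by blast
      then show False
        using nice V ay(3) unfolding nice_graph_def by auto
    qed
    then obtain t' where "t' \<in> V" "t' \<notin> {a, y}"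
      by blast
    then obtain z y' where zy': "{z, y'} \<in> E" "z \<in> {a, y}" "y' \<in> V" "y' \<notin> {a, y}"
      using connected_graph_edge_leaving[OF con, of a "{a, y}"] a ay(2) by blast
    have "grown_from_cherry E {z, a, y, y'}"
    proof (cases "z = a")
      case True
      then show ?thesis
        using zy' ay grown_from_cherry.cherry[of a y y' E] by (auto simp: insert_commute)
    next
      case False
      then show ?thesis
        using zy' ay grown_from_cherry.cherry[of y a y' E] by (auto simp: insert_commute)
    qed
    then show ?thesis
      using grown_from_cherry_spanning[OF finV con] a ay(2) zy'(2,3) by auto
  qed
qed

lemma induced_edges_simple_graph: "simple_graph V E \<Longrightarrow> induced_edges E V = E"
  unfolding simple_graph_def induced_edges_def by auto

lemma irregularising_if_irregularises_on:
  assumes simple: "simple_graph V E" and "V \<noteq> {}"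
    and irr: "irregularises_on E V (\<lambda>v. card {e \<in> E. v \<in> e}) F w"
  shows "irregularising V E w"
proof -
  have "is_walk V E w"
    using irr \<open>V \<noteq> {}\<close> by (auto simp: irregularises_on_def is_walk_iff)
  moreover have "deg_plus_walk E w u \<noteq> deg_plus_walk E w v" if "{u, v} \<in> E" for u v
    using irr simple_graph_edgeD[OF simple that] that
    unfolding irregularises_on_def deg_plus_walk_eq by blast
  ultimately show ?thesis
    by (simp add: irregularising_def)
qed

lemma grown_from_cherry_irregularising:
  assumes simple: "simple_graph V E" and grown: "grown_from_cherry E V"
  obtains w where "irregularising V E w" "walk_length w \<le> 2 * (card E + card V - 1)"
proof -
  obtain w where w: "irregularises_on E V (\<lambda>v. card {e \<in> E. v \<in> e}) (\<lambda>_. {}) w"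
    "length w < 2 * (card V + card (induced_edges E V))"
    using grown_from_cherry_irregularises_on[OF grown, of "\<lambda>_. {}" "\<lambda>v. card {e \<in> E. v \<in> e}"]
    by auto
  have "irregularising V E w"
    using irregularising_if_irregularises_on[OF simple grown_from_cherry_nonempty[OF grown] w(1)] .
  moreover have "walk_length w \<le> 2 * (card E + card V - 1)"
    using w(2) induced_edges_simple_graph[OF simple] by (simp add: walk_length_def)
  ultimately show ?thesis
    using that by blast
qed

lemma MLW_le_walk_length: "irregularising V E w \<Longrightarrow> MLW V E \<le> walk_length w"
  unfolding MLW_def by (rule Least_le) blast

lemma nice_graph_irregularising_walk:
  assumes simple: "simple_graph V E" and nice: "nice_graph V E"
  obtains w where "irregularising V E w" "walk_length w \<le> 2 * (card E + card V - 1)"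
    "card V \<le> card E + 1"
  using nice_graph_trivial_or_grown_from_cherry[OF simple nice]
proof (elim disjE exE conjE)
  fix a
  assume "V = {a}" "E = {}"
  then show thesis
    using that[of "[a]"] by (simp add: irregularising_def is_walk_def walk_length_def)
next
  assume grown: "grown_from_cherry E V"
  have "card V \<le> card E + 1"
    using grown_from_cherry_card[OF grown] induced_edges_simple_graph[OF simple] by simp
  then show thesis
    using grown_from_cherry_irregularising[OF simple grown] that by blast
qed

theorem corollary4p2:
  fixes V :: "'a set" and E :: "'a set set" and n m :: nat
  assumes "simple_graph V E" and "nice_graph V E"
    and "n = card V" and "m = card E"
  shows "(\<exists>w. irregularising V E w) \<and> MLW V E \<le> 2 * (m + n - 1) \<and> MLW V E \<le> 4 * m"
proof -
  obtain w where w: "irregularising V E w" "walk_length w \<le> 2 * (card E + card V - 1)"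
    "card V \<le> card E + 1"
    using nice_graph_irregularising_walk[OF assms(1,2)] .
  have "MLW V E \<le> 2 * (m + n - 1)"
    using MLW_le_walk_length[OF w(1)] w(2) assms(3,4) by simp
  moreover have "2 * (m + n - 1) \<le> 4 * m"
    using w(3) assms(3,4) by linarith
  ultimately show ?thesis
    using w(1) le_trans by blast
qed

end
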